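(* Let $k\ge1$ and $\mathcal{H}\subset\mathbb{Z}^k\setminus\{\mathbf{0}\}$. Then $\gamma(\mathcal{H})\le\delta(\mathcal{H})$.
   Context: $\lVert x\rVert$ denotes the distance from $x\in\mathbb{R}$ to the nearest integer and $\cdot$ the standard inner product. Let $\mathcal{T}(\mathcal{H})$ be the set of real trigonometric polynomials $T(\mathbf{x})=a_0+\sum_{\mathbf{h}\in\mathcal{H}}a_{\mathbf{h}}\cos(2\pi\mathbf{h}\cdot\mathbf{x})$ (finitely many nonzero real $a_{\mathbf{h}}$) with $T(\mathbf{x})\ge0$ for all $\mathbf{x}\in\mathbb{R}^k$ and $T(\mathbf{0})=1$. Define $\delta(\mathcal{H})=\inf_{T\in\mathcal{T}(\mathcal{H})}a_0$ and $\gamma(\mathcal{H})=\sup_{\xi\in\mathbb{R}^k}\inf_{\mathbf{h}\in\mathcal{H}}\lVert\mathbf{h}\cdot\xi\rVert$. *)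

theory Defs
  imports "HOL-Analysis.Analysis"
begin

definition dist_nearest_int :: "real \<Rightarrow> real" where
  "dist_nearest_int x = infdist x (\<int>::real set)"

definition ivec :: "int ^ 'k \<Rightarrow> real ^ 'k" where
  "ivec h = (\<chi> i. real_of_int (h $ i))"

definition trig_eval :: "(int ^ 'k) set \<Rightarrow> real \<Rightarrow> (int ^ 'k \<Rightarrow> real) \<Rightarrow> real ^ 'k \<Rightarrow> real" where
  "trig_eval H a0 a x =
     a0 + (\<Sum>h\<in>{h\<in>H. a h \<noteq> 0}. a h * cos (2 * pi * (ivec h \<bullet> x)))"

definition in_TH :: "(int ^ 'k) set \<Rightarrow> real \<Rightarrow> (int ^ 'k \<Rightarrow> real) \<Rightarrow> bool" where
  "in_TH H a0 a \<longleftrightarrow>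
     finite {h\<in>H. a h \<noteq> 0} \<and>
     (\<forall>x. trig_eval H a0 a x \<ge> 0) \<and>
     trig_eval H a0 a 0 = 1"

definition delta_H :: "(int ^ 'k) set \<Rightarrow> real" where
  "delta_H H = Inf {a0. \<exists>a. in_TH H a0 a}"

definition gamma_H :: "(int ^ 'k) set \<Rightarrow> real" where
  "gamma_H H = (SUP \<xi>::real ^ 'k. INF h\<in>H. dist_nearest_int (ivec h \<bullet> \<xi>))"

end

theory Submission
  imports Defs
begin

text \<open>
Sample a nonnegative trigonometric polynomial T(x) = a0 + \<Sum> a_h cos(2\<pi> h\<cdot>x) with T(0) = 1
along the multiples of a rational point z/N close to \<xi>. On the cyclic group \<int>/N this gives a
nonnegative function whose frequencies h\<cdot>z all stay at distance about N m from 0 modulo N,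
where m = min ||h\<cdot>\<xi>||. Pairing it with the Fejer kernel |\<Sum>_{j<L} e(jn/N)|^2 of length
L \<approx> N m, whose frequencies lie in (-L, L), kills every non-constant term:
L^2 = L^2 T(0) \<le> \<Sum>_n |D_L(n)|^2 T(nz/N) = N L a0. Letting N \<rightarrow> \<infinity> gives m \<le> a0. When m = 0 one
still needs a0 \<ge> 0, obtained by the same bound at a point \<xi> lying on none of the hyperplanes
h\<cdot>\<xi> = 0, scaled down so that 0 < |h\<cdot>\<xi>| < 1.
\<close>

definition add_char :: "nat \<Rightarrow> int \<Rightarrow> nat \<Rightarrow> complex" where
  "add_char N d n = cis (2 * pi * real n * of_int d / real N)"

lemma add_char_mult: "add_char N a n * add_char N b n = add_char N (a + b) n"
  unfolding add_char_def cis_mult by (simp add: add_divide_distrib distrib_left)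

lemma cnj_add_char: "cnj (add_char N a n) = add_char N (- a) n"
  unfolding add_char_def cis_cnj by simp

lemma add_char_0 [simp]: "add_char N d 0 = 1"
  unfolding add_char_def by simp

lemma sum_add_char:
  assumes N: "N > 0"
  shows "(\<Sum>n<N. add_char N d n) = (if int N dvd d then of_nat N else 0)"
proof -
  define z where "z = cis (2 * pi * of_int d / real N)"
  have power: "add_char N d n = z ^ n" for n
    unfolding add_char_def z_def Complex.DeMoivre by (simp add: mult_ac)
  show ?thesis
  proof (cases "int N dvd d")
    case True
    then obtain q where "d = int N * q" by blast
    then have "2 * pi * of_int d / real N = 2 * pi * of_int q" using N by simp
    then have "z = 1" unfolding z_def by (metis Ints_of_int cis_multiple_2pi)
    then show ?thesis using True by (simp add: power)
  next
    case False
    have "z \<noteq> 1"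
    proof
      assume "z = 1"
      then have "cos (2 * pi * of_int d / real N) = 1" unfolding z_def
        by (metis Re_complex_of_real cis.sel(1) one_complex.sel(1))
      then obtain q :: int where "2 * pi * of_int d / real N = of_int q * 2 * pi"
        using cos_one_2pi_int by blast
      then have "of_int d = real N * of_int q" using N by (simp add: field_simps)
      then have "d = int N * q" by (metis of_int_eq_iff of_int_mult of_int_of_nat_eq)
      with False show False by auto
    qed
    moreover have "z ^ N = 1"
      unfolding z_def Complex.DeMoivre using N by simp
    ultimately show ?thesis using False by (simp add: power sum_gp_strict)
  qed
qed

lemma norm_sum_add_char_squared:
  "complex_of_real ((cmod (\<Sum>j<L. add_char N (int j) n))\<^sup>2)
     = (\<Sum>j<L. \<Sum>l<L. add_char N (int j - int l) n)"
proof -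
  have "complex_of_real ((cmod (\<Sum>j<L. add_char N (int j) n))\<^sup>2)
      = (\<Sum>j<L. add_char N (int j) n) * cnj (\<Sum>j<L. add_char N (int j) n)"
    by (rule complex_norm_square)
  also have "\<dots> = (\<Sum>j<L. \<Sum>l<L. add_char N (int j) n * cnj (add_char N (int l) n))"
    unfolding cnj_sum by (rule sum_product)
  finally show ?thesis by (simp add: cnj_add_char add_char_mult)
qed

lemma sum_add_char_mult_cos_poly:
  fixes c :: "'a \<Rightarrow> real" and k :: "'a \<Rightarrow> int"
  assumes N: "N > 0"
    and off: "\<And>h. h \<in> S \<Longrightarrow> \<not> int N dvd (d + k h) \<and> \<not> int N dvd (d - k h)"
  shows "(\<Sum>n<N. add_char N d n *
            complex_of_real (a0 + (\<Sum>h\<in>S. c h * cos (2 * pi * real n * of_int (k h) / real N))))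
       = a0 * (if int N dvd d then of_nat N else 0)"
proof -
  define G where "G e = (\<Sum>n<N. add_char N e n)" for e
  have cos_cis: "complex_of_real (cos x) = (cis x + cis (- x)) / 2" for x
    by (simp add: complex_eq_iff cis.code)
  have cos_char: "add_char N d n * complex_of_real (cos (2 * pi * real n * of_int e / real N))
      = (add_char N (d + e) n + add_char N (d - e) n) / 2" for n e
    unfolding cos_cis add_char_mult [symmetric] diff_conv_add_uminus
    by (simp add: add_char_def distrib_left add_divide_distrib)
  have pointwise: "add_char N d n *
          complex_of_real (a0 + (\<Sum>h\<in>S. c h * cos (2 * pi * real n * of_int (k h) / real N)))
      = a0 * add_char N d n + (\<Sum>h\<in>S. c h / 2 * (add_char N (d + k h) n + add_char N (d - k h) n))"
    for n
  proof -
    have "add_char N d n *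
          complex_of_real (a0 + (\<Sum>h\<in>S. c h * cos (2 * pi * real n * of_int (k h) / real N)))
        = a0 * add_char N d n + (\<Sum>h\<in>S. c h *
            (add_char N d n * complex_of_real (cos (2 * pi * real n * of_int (k h) / real N))))"
      by (simp add: distrib_left sum_distrib_left mult_ac)
    then show ?thesis by (simp only: cos_char) (simp add: algebra_simps add_divide_distrib)
  qed
  have "(\<Sum>n<N. add_char N d n *
            complex_of_real (a0 + (\<Sum>h\<in>S. c h * cos (2 * pi * real n * of_int (k h) / real N))))
      = a0 * G d + (\<Sum>h\<in>S. c h / 2 * (G (d + k h) + G (d - k h)))"
    unfolding pointwise G_def
    by (simp add: sum.distrib sum_distrib_left distrib_left sum.swap [of _ S])
  also have "\<dots> = a0 * G d"
    using off by (simp add: G_def sum_add_char [OF N])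
  finally show ?thesis by (simp add: G_def sum_add_char [OF N])
qed

lemma fejer_bound_cyclic:
  fixes c :: "'a \<Rightarrow> real" and k :: "'a \<Rightarrow> int"
  assumes N: "N > 0" and L: "1 \<le> L" "L \<le> N"
    and nonneg: "\<And>n. 0 \<le> a0 + (\<Sum>h\<in>S. c h * cos (2 * pi * real n * of_int (k h) / real N))"
    and one: "a0 + (\<Sum>h\<in>S. c h) = 1"
    and gap: "\<And>h d. h \<in> S \<Longrightarrow> \<bar>d\<bar> < int L \<Longrightarrow> \<not> int N dvd (d + k h)"
  shows "real L / real N \<le> a0"
proof -
  define p where "p n = a0 + (\<Sum>h\<in>S. c h * cos (2 * pi * real n * of_int (k h) / real N))" for n
  define w where "w n = (cmod (\<Sum>j<L. add_char N (int j) n))\<^sup>2" for n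
  have "w 0 * p 0 \<le> (\<Sum>n<N. w n * p n)"
    using N nonneg by (intro member_le_sum) (auto simp: w_def p_def)
  then have lower: "real L ^ 2 \<le> (\<Sum>n<N. w n * p n)"
    using one by (simp add: w_def p_def)
  have diag: "int N dvd (int j - int l) \<longleftrightarrow> l = j" if "j < L" "l < L" for j l
  proof
    assume "int N dvd (int j - int l)"
    moreover have "\<bar>int j - int l\<bar> < int N" using that L by auto
    ultimately have "int j - int l = 0"
      using dvd_imp_le_int [of "int j - int l" "int N"] by (cases "int j - int l = 0") auto
    then show "l = j" by simp
  qed simp
  have off: "\<not> int N dvd (int j - int l + k h) \<and> \<not> int N dvd (int j - int l - k h)"
    if "j < L" "l < L" "h \<in> S" for j l h
  proof -
    have "int N dvd (int j - int l - k h) \<longleftrightarrow> int N dvd (int l - int j + k h)"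
      by (metis dvd_minus_iff minus_diff_eq diff_diff_eq2 add.commute diff_minus_eq_add)
    then show ?thesis using gap [OF that(3), of "int j - int l"] gap [OF that(3), of "int l - int j"] that
      by auto
  qed
  have "complex_of_real (\<Sum>n<N. w n * p n)
      = (\<Sum>n<N. \<Sum>j<L. \<Sum>l<L. add_char N (int j - int l) n * complex_of_real (p n))"
    by (simp only: of_real_sum of_real_mult w_def norm_sum_add_char_squared sum_distrib_right)
  also have "\<dots> = (\<Sum>j<L. \<Sum>l<L. \<Sum>n<N. add_char N (int j - int l) n * complex_of_real (p n))"
    by (subst sum.swap, rule sum.cong [OF refl], subst sum.swap, rule refl)
  also have "\<dots> = (\<Sum>j<L. \<Sum>l<L. (if l = j then complex_of_real a0 * of_nat N else 0))"
  proof (intro sum.cong refl)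
    fix j l assume "j \<in> {..<L}" "l \<in> {..<L}"
    then show "(\<Sum>n<N. add_char N (int j - int l) n * complex_of_real (p n))
        = (if l = j then complex_of_real a0 * of_nat N else 0)"
      unfolding p_def using off diag by (subst sum_add_char_mult_cos_poly [OF N]) auto
  qed
  also have "\<dots> = complex_of_real (real L * a0 * real N)"
    by simp
  finally have "real L ^ 2 \<le> real L * a0 * real N"
    using lower of_real_eq_iff by metis
  then have "real L \<le> a0 * real N"
    using L by (simp add: power2_eq_square mult_ac mult_le_cancel_left)
  then show ?thesis using N by (simp add: divide_le_eq)
qed

lemma dist_nearest_int_nonneg: "0 \<le> dist_nearest_int x"
  unfolding dist_nearest_int_def by (rule infdist_nonneg)

lemma dist_nearest_int_le: "j \<in> \<int> \<Longrightarrow> dist_nearest_int x \<le> \<bar>x - j\<bar>"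
  unfolding dist_nearest_int_def using infdist_le [of j \<int> x] by (simp add: dist_real_def)

lemma dist_nearest_int_less_1: "dist_nearest_int x < 1"
proof -
  have "dist_nearest_int x \<le> \<bar>x - of_int \<lfloor>x\<rfloor>\<bar>" by (rule dist_nearest_int_le) simp
  also have "\<dots> < 1" by linarith
  finally show ?thesis .
qed

lemma dist_nearest_int_le_add_abs_diff: "dist_nearest_int x \<le> dist_nearest_int y + \<bar>x - y\<bar>"
  unfolding dist_nearest_int_def using infdist_triangle [of x \<int> y] by (simp add: dist_real_def)

lemma dist_nearest_int_pos:
  assumes "0 < \<bar>x\<bar>" "\<bar>x\<bar> < 1"
  shows "0 < dist_nearest_int x"
proof -
  have "x \<notin> \<int>"
  proof
    assume "x \<in> \<int>"
    then obtain j where "x = of_int j" by (auto elim: Ints_cases)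
    with assms show False by auto
  qed
  then show ?thesis unfolding dist_nearest_int_def
    by (intro infdist_pos_not_in_closed) auto
qed

lemma dist_nearest_int_divide_le:
  assumes N: "N > 0" and "int N dvd (d + k)"
  shows "dist_nearest_int (of_int k / real N) \<le> \<bar>of_int d\<bar> / real N"
proof -
  obtain q where q: "d + k = int N * q" using assms(2) by blast
  have "of_int k / real N - of_int q = (of_int k - real N * of_int q) / real N"
    using N by (simp add: diff_divide_distrib)
  also have "of_int k - real N * of_int q = - real_of_int d"
    using arg_cong [OF q, of real_of_int] by simp
  finally have "of_int k / real N - of_int q = - of_int d / real N" .
  moreover have "dist_nearest_int (of_int k / real N) \<le> \<bar>of_int k / real N - of_int q\<bar>"
    by (rule dist_nearest_int_le) simp
  ultimately show ?thesis by simp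
qed

lemma ivec_inner_scaleR_ivec:
  "ivec h \<bullet> (c *\<^sub>R ivec z) = c * of_int (\<Sum>i\<in>UNIV. h $ i * z $ i)"
  unfolding ivec_def inner_vec_def by (simp add: sum_distrib_left mult_ac)

lemma inner_floor_approx:
  fixes h :: "int ^ 'k" and \<xi> :: "real ^ 'k"
  assumes N: "N > 0"
  shows "\<bar>ivec h \<bullet> ((1 / real N) *\<^sub>R ivec (\<chi> i. \<lfloor>real N * \<xi> $ i\<rfloor>)) - ivec h \<bullet> \<xi>\<bar>
           \<le> (\<Sum>i\<in>UNIV. \<bar>real_of_int (h $ i)\<bar>) / real N"
proof -
  define z :: "int ^ 'k" where "z = (\<chi> i. \<lfloor>real N * \<xi> $ i\<rfloor>)"
  have coord: "\<bar>real_of_int (z $ i) / real N - \<xi> $ i\<bar> \<le> 1 / real N" for i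
  proof -
    have "\<bar>real_of_int (z $ i) - real N * \<xi> $ i\<bar> \<le> 1"
      unfolding z_def by simp linarith
    then have "\<bar>real_of_int (z $ i) - real N * \<xi> $ i\<bar> / real N \<le> 1 / real N"
      using N by (simp add: divide_right_mono)
    moreover have "(real_of_int (z $ i) - real N * \<xi> $ i) / real N = real_of_int (z $ i) / real N - \<xi> $ i"
      using N by (simp add: field_simps)
    ultimately show ?thesis by (metis abs_divide abs_of_nat)
  qed
  have "ivec h \<bullet> ((1 / real N) *\<^sub>R ivec z) - ivec h \<bullet> \<xi>
      = (\<Sum>i\<in>UNIV. real_of_int (h $ i) * (real_of_int (z $ i) / real N - \<xi> $ i))"
    unfolding ivec_def inner_vec_def by (simp add: sum_subtractf [symmetric] algebra_simps)
  also have "\<bar>\<dots>\<bar> \<le> (\<Sum>i\<in>UNIV. \<bar>real_of_int (h $ i)\<bar> * (1 / real N))"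
    by (rule order_trans [OF sum_abs sum_mono]) (simp only: abs_mult, rule mult_left_mono [OF coord], simp)
  finally show ?thesis unfolding z_def by (simp add: sum_divide_distrib)
qed

lemma dist_nearest_int_inner_floor_approx:
  fixes h :: "int ^ 'k" and \<xi> :: "real ^ 'k"
  assumes "N > 0"
  shows "dist_nearest_int (ivec h \<bullet> \<xi>)
           \<le> dist_nearest_int (ivec h \<bullet> ((1 / real N) *\<^sub>R ivec (\<chi> i. \<lfloor>real N * \<xi> $ i\<rfloor>)))
             + (\<Sum>i\<in>UNIV. \<bar>real_of_int (h $ i)\<bar>) / real N"
  using dist_nearest_int_le_add_abs_diff [of "ivec h \<bullet> \<xi>"] inner_floor_approx [OF assms, of h \<xi>]
  by (smt (verit) abs_minus_commute)

lemma const_term_ge_rational_sample: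
  fixes S :: "(int ^ 'k) set" and a :: "int ^ 'k \<Rightarrow> real" and z :: "int ^ 'k"
  assumes nonneg: "\<And>x. 0 \<le> a0 + (\<Sum>h\<in>S. a h * cos (2 * pi * (ivec h \<bullet> x)))"
    and one: "a0 + (\<Sum>h\<in>S. a h) = 1"
    and N: "N > 0" and L: "1 \<le> L" "L \<le> N"
    and far: "\<And>h. h \<in> S \<Longrightarrow>
      real L - 1 < real N * dist_nearest_int (ivec h \<bullet> ((1 / real N) *\<^sub>R ivec z))"
  shows "real L / real N \<le> a0"
proof -
  define k where "k h = (\<Sum>i\<in>UNIV. h $ i * z $ i)" for h :: "int ^ 'k"
  have inner_multiple: "ivec h \<bullet> (c *\<^sub>R ((1 / real N) *\<^sub>R ivec z)) = c * of_int (k h) / real N" for c h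
    unfolding k_def scaleR_scaleR ivec_inner_scaleR_ivec by simp
  have inner_point: "ivec h \<bullet> ((1 / real N) *\<^sub>R ivec z) = of_int (k h) / real N" for h
    unfolding k_def ivec_inner_scaleR_ivec by simp
  show ?thesis
  proof (rule fejer_bound_cyclic [OF N L _ one])
    fix n
    show "0 \<le> a0 + (\<Sum>h\<in>S. a h * cos (2 * pi * real n * of_int (k h) / real N))"
      using nonneg [of "real n *\<^sub>R ((1 / real N) *\<^sub>R ivec z)"] unfolding inner_multiple
      by (simp add: mult.assoc)
  next
    fix h d assume h: "h \<in> S" and d: "\<bar>d\<bar> < int L"
    show "\<not> int N dvd (d + k h)"
    proof
      assume "int N dvd (d + k h)"
      then have "real N * dist_nearest_int (of_int (k h) / real N) \<le> \<bar>of_int d\<bar>"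
        using dist_nearest_int_divide_le [OF N] N by (simp add: field_simps)
      moreover have "\<bar>real_of_int d\<bar> \<le> real L - 1" using d by linarith
      ultimately show False using far [OF h] unfolding inner_point by linarith
    qed
  qed
qed

lemma const_term_ge_min_dist:
  fixes S :: "(int ^ 'k) set" and a :: "int ^ 'k \<Rightarrow> real" and \<xi> :: "real ^ 'k"
  assumes fin: "finite S" and "S \<noteq> {}"
    and nonneg: "\<And>x. 0 \<le> a0 + (\<Sum>h\<in>S. a h * cos (2 * pi * (ivec h \<bullet> x)))"
    and one: "a0 + (\<Sum>h\<in>S. a h) = 1"
    and m: "0 < m" "\<And>h. h \<in> S \<Longrightarrow> m \<le> dist_nearest_int (ivec h \<bullet> \<xi>)"
  shows "m \<le> a0"
proof (rule field_le_epsilon)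
  fix \<epsilon> :: real assume "0 < \<epsilon>"
  define C where "C = (\<Sum>h\<in>S. \<Sum>i\<in>UNIV. \<bar>real_of_int (h $ i)\<bar>)"
  have C: "(\<Sum>i\<in>UNIV. \<bar>real_of_int (h $ i)\<bar>) \<le> C" if "h \<in> S" for h
    unfolding C_def using fin that by (intro member_le_sum) (auto intro: sum_nonneg)
  have "0 \<le> C" unfolding C_def by (simp add: sum_nonneg)
  have "m < 1" using \<open>S \<noteq> {}\<close> m(2) dist_nearest_int_less_1 by (meson ex_in_conv le_less_trans)
  obtain N :: nat where "max ((C + 1) / \<epsilon>) ((C + 1) / m) < real N"
    using reals_Archimedean2 by blast
  then have "C + 1 < real N * \<epsilon>" "C + 1 < real N * m" and N: "N > 0"
    using \<open>0 < \<epsilon>\<close> m(1) \<open>0 \<le> C\<close> by (auto simp: divide_less_eq mult.commute intro!: gr0I)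
  define L where "L = nat \<lfloor>real N * m - C\<rfloor>"
  have L: "1 \<le> L" "real L \<le> real N * m - C" "real N * m - C - 1 < real L"
    using \<open>C + 1 < real N * m\<close> unfolding L_def by linarith+
  have "real N * m \<le> real N"
    using \<open>m < 1\<close> by (simp add: mult_left_le)
  then have "L \<le> N"
    using L(2) \<open>0 \<le> C\<close> by (simp flip: of_nat_le_iff)
  have "real L / real N \<le> a0"
  proof (rule const_term_ge_rational_sample [OF nonneg one N L(1) \<open>L \<le> N\<close>])
    fix h assume h: "h \<in> S"
    have "m \<le> dist_nearest_int (ivec h \<bullet> ((1 / real N) *\<^sub>R ivec (\<chi> i. \<lfloor>real N * \<xi> $ i\<rfloor>))) + C / real N"
    proof -
      have "(\<Sum>i\<in>UNIV. \<bar>real_of_int (h $ i)\<bar>) / real N \<le> C / real N"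
        using C [OF h] by (simp add: divide_right_mono)
      then show ?thesis
        using m(2) [OF h] dist_nearest_int_inner_floor_approx [OF N, of h \<xi>] by linarith
    qed
    then show "real L - 1 < real N *
        dist_nearest_int (ivec h \<bullet> ((1 / real N) *\<^sub>R ivec (\<chi> i. \<lfloor>real N * \<xi> $ i\<rfloor>)))"
      using L(2) N by (simp add: field_simps)
  qed
  moreover have "m - \<epsilon> < real L / real N"
    using L(3) \<open>C + 1 < real N * \<epsilon>\<close> N by (simp add: field_simps)
  ultimately show "m \<le> a0 + \<epsilon>" by linarith
qed

lemma interior_Union_hyperplanes_empty:
  fixes F :: "'a::euclidean_space set"
  assumes "finite F" "0 \<notin> F"
  shows "interior (\<Union>u\<in>F. {x. u \<bullet> x = 0}) = {}"
  using assms
proof (induction F rule: finite_induct)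
  case (insert u F)
  have "interior ({x. u \<bullet> x = 0} \<union> (\<Union>u\<in>F. {x. u \<bullet> x = 0})) = interior {x. u \<bullet> x = 0}"
    using insert by (intro interior_closed_Un_empty_interior closed_hyperplane) auto
  also have "\<dots> = {}" using insert by simp
  finally show ?case by simp
qed simp

lemma exists_not_orthogonal:
  fixes F :: "'a::euclidean_space set"
  assumes "finite F" "0 \<notin> F"
  shows "\<exists>v. \<forall>u\<in>F. u \<bullet> v \<noteq> 0"
proof (rule ccontr)
  assume "\<not> ?thesis"
  then have "(\<Union>u\<in>F. {x. u \<bullet> x = 0}) = UNIV" by auto
  then show False using interior_Union_hyperplanes_empty [OF assms] by simp
qed

lemma const_term_pos:
  fixes S :: "(int ^ 'k) set" and a :: "int ^ 'k \<Rightarrow> real"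
  assumes fin: "finite S" and "S \<noteq> {}" and "0 \<notin> S"
    and nonneg: "\<And>x. 0 \<le> a0 + (\<Sum>h\<in>S. a h * cos (2 * pi * (ivec h \<bullet> x)))"
    and one: "a0 + (\<Sum>h\<in>S. a h) = 1"
  shows "0 < a0"
proof -
  have "0 \<notin> ivec ` S"
    using \<open>0 \<notin> S\<close> by (auto simp: ivec_def vec_eq_iff) (metis vec_eq_iff zero_index)
  then obtain v where v: "\<And>h. h \<in> S \<Longrightarrow> ivec h \<bullet> v \<noteq> 0"
    using exists_not_orthogonal [of "ivec ` S"] fin by auto
  define B where "B = (\<Sum>h\<in>S. \<bar>ivec h \<bullet> v\<bar>)"
  have "0 \<le> B" unfolding B_def by (simp add: sum_nonneg)
  define \<xi> where "\<xi> = (1 / (1 + B)) *\<^sub>R v"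
  have pos: "0 < dist_nearest_int (ivec h \<bullet> \<xi>)" if h: "h \<in> S" for h
  proof (rule dist_nearest_int_pos)
    have "\<bar>ivec h \<bullet> v\<bar> \<le> B"
      unfolding B_def using fin h by (intro member_le_sum) auto
    moreover have "\<bar>ivec h \<bullet> \<xi>\<bar> = \<bar>ivec h \<bullet> v\<bar> / (1 + B)"
      unfolding \<xi>_def using \<open>0 \<le> B\<close> by (simp add: abs_mult)
    ultimately show "0 < \<bar>ivec h \<bullet> \<xi>\<bar>" "\<bar>ivec h \<bullet> \<xi>\<bar> < 1"
      using v [OF h] \<open>0 \<le> B\<close> by (simp_all add: add_pos_nonneg divide_less_eq)
  qed
  define m where "m = Min ((\<lambda>h. dist_nearest_int (ivec h \<bullet> \<xi>)) ` S)"
  have "m \<in> (\<lambda>h. dist_nearest_int (ivec h \<bullet> \<xi>)) ` S"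
    unfolding m_def using fin \<open>S \<noteq> {}\<close> by simp
  then have "0 < m" using pos by auto
  moreover have "m \<le> a0"
    using fin by (intro const_term_ge_min_dist [where \<xi> = \<xi>, OF fin \<open>S \<noteq> {}\<close> nonneg one \<open>0 < m\<close>]) (simp add: m_def)
  ultimately show ?thesis by simp
qed

lemma INF_dist_nearest_int_le_const_term:
  fixes H :: "(int ^ 'k) set" and \<xi> :: "real ^ 'k"
  assumes "in_TH H a0 a" "H \<noteq> {}" "0 \<notin> H"
  shows "(INF h\<in>H. dist_nearest_int (ivec h \<bullet> \<xi>)) \<le> a0"
proof -
  define S where "S = {h\<in>H. a h \<noteq> 0}"
  have fin: "finite S"
    and nonneg: "\<And>x. 0 \<le> a0 + (\<Sum>h\<in>S. a h * cos (2 * pi * (ivec h \<bullet> x)))"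
    and one: "a0 + (\<Sum>h\<in>S. a h) = 1"
    using assms(1) unfolding in_TH_def trig_eval_def S_def by simp_all
  have bdd: "bdd_below ((\<lambda>h. dist_nearest_int (ivec h \<bullet> \<xi>)) ` H)"
    by (rule bdd_belowI [of _ 0]) (auto simp: dist_nearest_int_nonneg)
  show ?thesis
  proof (cases "S = {}")
    case True
    obtain h where "h \<in> H" using assms(2) by blast
    then have "(INF h\<in>H. dist_nearest_int (ivec h \<bullet> \<xi>)) \<le> dist_nearest_int (ivec h \<bullet> \<xi>)"
      by (rule cINF_lower [OF bdd])
    also have "\<dots> < 1" by (rule dist_nearest_int_less_1)
    finally show ?thesis using one True by simp
  next
    case False
    obtain h where h: "h \<in> S" "\<And>h'. h' \<in> S \<Longrightarrow> dist_nearest_int (ivec h \<bullet> \<xi>) \<le> dist_nearest_int (ivec h' \<bullet> \<xi>)"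
      using ex_is_arg_min_if_finite [OF fin False, of "\<lambda>h. dist_nearest_int (ivec h \<bullet> \<xi>)"]
      unfolding is_arg_min_def by (auto simp: not_less)
    have "(INF h\<in>H. dist_nearest_int (ivec h \<bullet> \<xi>)) \<le> dist_nearest_int (ivec h \<bullet> \<xi>)"
      using h(1) unfolding S_def by (intro cINF_lower [OF bdd]) auto
    also have "\<dots> \<le> a0"
    proof (cases "0 < dist_nearest_int (ivec h \<bullet> \<xi>)")
      case True
      then show ?thesis by (rule const_term_ge_min_dist [OF fin False nonneg one _ h(2)])
    next
      case False
      moreover have "0 < a0"
        using assms(3) by (intro const_term_pos [OF fin \<open>S \<noteq> {}\<close> _ nonneg one]) (auto simp: S_def)
      ultimately show ?thesis by simp
    qed
    finally show ?thesis .
  qed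
qed

theorem proposition3p1:
  fixes H :: "(int ^ 'k) set"
  assumes "H \<noteq> {}"
    and "0 \<notin> H"
  shows "gamma_H H \<le> delta_H H"
proof -
  have "in_TH H 1 (\<lambda>_. 0)" unfolding in_TH_def trig_eval_def by simp
  then have "{a0. \<exists>a. in_TH H a0 a} \<noteq> {}" by blast
  then show ?thesis
    unfolding gamma_H_def delta_H_def
    using INF_dist_nearest_int_le_const_term [OF _ assms]
    by (intro cInf_greatest cSUP_least) auto
qed

end
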